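(* $\left\|\begin{bmatrix}1&1&0&0\\0&1&1&0\\0&0&1&1\\0&0&1&0\end{bmatrix}\right\|_\bullet>\left\|\begin{bmatrix}1&1&0&0\\0&1&1&0\\0&0&1&1\\0&0&0&1\end{bmatrix}\right\|_\bullet$.
   Context: Fix $\mathbb F\in\{\mathbb R,\mathbb C\}$. For an $m\times n$ matrix $A$, the Schur norm is $\|A\|_\bullet=\sup\{\|A\bullet X\|: X\in M_{m,n}(\mathbb F),\ \|X\|\le1\}$, where $A\bullet X=[a_{ij}x_{ij}]$ is the entrywise product and $\|\cdot\|$ is the operator norm $\ell^2_n\to\ell^2_m$. *)

theory Defs
  imports "HOL-Analysis.Analysis"
begin

definition schur_prod :: "'a::times^'n^'m \<Rightarrow> 'a^'n^'m \<Rightarrow> 'a^'n^'m" where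
  "schur_prod A X = (\<chi> i j. A $ i $ j * X $ i $ j)"

text \<open>Operator norm l2 to l2 of a matrix (vec carries the Euclidean norm).\<close>
definition op_norm :: "'a::real_normed_field^'n^'m \<Rightarrow> real" where
  "op_norm A = onorm (\<lambda>x. A *v x)"

definition schur_norm :: "'a::real_normed_field^'n^'m \<Rightarrow> real" where
  "schur_norm A = (SUP X\<in>{X. op_norm X \<le> 1}. op_norm (schur_prod A X))"

end

theory Submission
  imports Defs
begin

(* Both norms are separated by 154/125.  Upper bound: if S_ij = SUM_k d_k x_i(k) y_j(k) with
   weights d_k >= 0 and all weighted squared norms SUM_k d_k x_i(k)^2 and SUM_k d_k y_j(k)^2
   at most t, then ||S o X|| <= t ||X|| for the Schur product o, by Cauchy-Schwarz (the easy
   half of the factorisation characterisation of Schur multipliers); B admits such a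
   factorisation with t = 154/125.  Lower bound: for an explicit orthogonal X and
   z = (1, 2, 2, 1) one has ||(A o X) z|| > 154/125 ||z||.  All matrices involved are real,
   so the same certificates work over the reals and over the complex numbers. *)

definition matrix_of_real :: "real^'n^'m \<Rightarrow> 'a::real_algebra_1^'n^'m" where
  "matrix_of_real M = (\<chi> i j. of_real (M $ i $ j))"

lemma norm_vec_power2: "(norm v)\<^sup>2 = (\<Sum>i\<in>UNIV. (norm (v $ i))\<^sup>2)"
  by (simp add: norm_vec_def L2_set_def sum_nonneg)

lemma norm_mult_vec_le_op_norm:
  fixes M :: "'a::{euclidean_space,real_normed_field}^'n^'m"
  shows "norm (M *v z) \<le> op_norm M * norm z"
  unfolding op_norm_def by (rule onorm[OF matrix_vector_mul_bounded_linear])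

lemma op_norm_nonneg:
  fixes M :: "'a::{euclidean_space,real_normed_field}^'n^'m"
  shows "0 \<le> op_norm M"
  unfolding op_norm_def by (rule onorm_pos_le[OF matrix_vector_mul_bounded_linear])

lemma op_norm_le:
  fixes M :: "'a::{euclidean_space,real_normed_field}^'n^'m"
  assumes "0 \<le> c" and "\<And>z. norm (M *v z) \<le> c * norm z"
  shows "op_norm M \<le> c"
  unfolding op_norm_def using assms by (rule onorm_bound)

lemma op_norm_gt:
  fixes M :: "'a::{euclidean_space,real_normed_field}^'n^'m"
  assumes "c * norm z < norm (M *v z)"
  shows "c < op_norm M"
  by (smt (verit) assms mult_right_mono norm_ge_zero norm_mult_vec_le_op_norm)

lemma schur_prod_mult_vec_factor:
  fixes S X :: "'a::{euclidean_space,real_normed_field}^'n^'m"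
  assumes "\<And>i j. S $ i $ j = of_real (\<Sum>k\<in>K. x i k * y j k)"
  shows "(schur_prod S X *v z) $ i = (\<Sum>k\<in>K. x i k *\<^sub>R (X *v (\<chi> j. y j k *\<^sub>R z $ j)) $ i)"
proof -
  have "(schur_prod S X *v z) $ i = (\<Sum>j\<in>UNIV. \<Sum>k\<in>K. (x i k * y j k) *\<^sub>R (X $ i $ j * z $ j))"
    unfolding matrix_vector_mult_def schur_prod_def
    by (simp add: assms scaleR_conv_of_real sum_distrib_right mult.assoc)
  also have "\<dots> = (\<Sum>k\<in>K. x i k *\<^sub>R (X *v (\<chi> j. y j k *\<^sub>R z $ j)) $ i)"
    by (subst sum.swap) (simp add: matrix_vector_mult_def scaleR_sum_right)
  finally show ?thesis .
qed

lemma L2_set_norm_rescaled_le: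
  fixes z :: "'a::real_normed_vector^'n"
  assumes "\<And>j. (\<Sum>k\<in>K. (y j k)\<^sup>2) \<le> b\<^sup>2" and "0 \<le> b"
  shows "L2_set (\<lambda>k. norm (\<chi> j. y j k *\<^sub>R z $ j)) K \<le> b * norm z"
proof -
  have "(\<Sum>k\<in>K. (norm (\<chi> j. y j k *\<^sub>R z $ j))\<^sup>2) = (\<Sum>j\<in>UNIV. (norm (z $ j))\<^sup>2 * (\<Sum>k\<in>K. (y j k)\<^sup>2))"
    by (simp add: norm_vec_power2 sum.swap[of _ K] sum_distrib_left power_mult_distrib mult.commute)
  also have "\<dots> \<le> (\<Sum>j\<in>UNIV. (norm (z $ j))\<^sup>2 * b\<^sup>2)"
    by (intro sum_mono mult_left_mono assms) simp
  also have "\<dots> = (b * norm z)\<^sup>2"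
    by (simp add: norm_vec_power2 sum_distrib_left power_mult_distrib mult.commute)
  finally have "L2_set (\<lambda>k. norm (\<chi> j. y j k *\<^sub>R z $ j)) K \<le> sqrt ((b * norm z)\<^sup>2)"
    unfolding L2_set_def by (rule real_sqrt_le_mono)
  then show ?thesis
    using assms(2) by simp
qed

lemma op_norm_schur_prod_le:
  fixes S X :: "'a::{euclidean_space,real_normed_field}^'n^'m"
  assumes S: "\<And>i j. S $ i $ j = of_real (\<Sum>k\<in>K. x i k * y j k)"
    and x: "\<And>i. (\<Sum>k\<in>K. (x i k)\<^sup>2) \<le> a\<^sup>2" and y: "\<And>j. (\<Sum>k\<in>K. (y j k)\<^sup>2) \<le> b\<^sup>2"
    and "0 \<le> a" "0 \<le> b"
  shows "op_norm (schur_prod S X) \<le> a * b * op_norm X"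
proof (rule op_norm_le)
  show "0 \<le> a * b * op_norm X"
    using assms(4,5) op_norm_nonneg[of X] by simp
  fix z
  define w where "w = schur_prod S X *v z"
  define u where "u k = (\<chi> j. y j k *\<^sub>R z $ j)" for k
  define v where "v k = (\<chi> i. x i k *\<^sub>R w $ i)" for k
  have "(norm w)\<^sup>2 = (\<Sum>i\<in>UNIV. w $ i \<bullet> w $ i)"
    by (simp add: power2_norm_eq_inner inner_vec_def)
  also have "\<dots> = (\<Sum>i\<in>UNIV. \<Sum>k\<in>K. (x i k *\<^sub>R w $ i) \<bullet> (X *v u k) $ i)"
    unfolding u_def by (subst (2) w_def, subst schur_prod_mult_vec_factor[OF S]) (simp add: inner_sum_right)
  also have "\<dots> = (\<Sum>k\<in>K. v k \<bullet> (X *v u k))"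
    by (subst sum.swap) (simp add: inner_vec_def v_def)
  also have "\<dots> \<le> (\<Sum>k\<in>K. norm (v k) * (op_norm X * norm (u k)))"
    by (intro sum_mono order_trans[OF norm_cauchy_schwarz] mult_left_mono norm_mult_vec_le_op_norm norm_ge_zero)
  also have "\<dots> = op_norm X * (\<Sum>k\<in>K. \<bar>norm (v k)\<bar> * \<bar>norm (u k)\<bar>)"
    by (simp add: sum_distrib_left algebra_simps)
  also have "\<dots> \<le> op_norm X * (L2_set (\<lambda>k. norm (v k)) K * L2_set (\<lambda>k. norm (u k)) K)"
    by (intro mult_left_mono L2_set_mult_ineq op_norm_nonneg)
  also have "\<dots> \<le> op_norm X * ((a * norm w) * (b * norm z))"
    unfolding u_def v_def
    by (intro mult_left_mono mult_mono L2_set_norm_rescaled_le x y L2_set_nonneg op_norm_nonneg assms(4,5))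
      (simp_all add: assms(4))
  finally have "norm w * norm w \<le> norm w * (a * b * op_norm X * norm z)"
    by (simp add: power2_eq_square algebra_simps)
  moreover have "0 \<le> a * b * op_norm X * norm z"
    using assms(4,5) op_norm_nonneg[of X] by simp
  ultimately show "norm w \<le> a * b * op_norm X * norm z"
    by (cases "norm w = 0") simp_all
qed

lemma op_norm_schur_prod_le_weighted:
  fixes S X :: "'a::{euclidean_space,real_normed_field}^'n^'m"
  assumes S: "\<And>i j. S $ i $ j = of_real (\<Sum>k\<in>K. d k * x i k * y j k)"
    and d: "\<And>k. k \<in> K \<Longrightarrow> 0 \<le> d k"
    and x: "\<And>i. (\<Sum>k\<in>K. d k * (x i k)\<^sup>2) \<le> t" and y: "\<And>j. (\<Sum>k\<in>K. d k * (y j k)\<^sup>2) \<le> t"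
  shows "op_norm (schur_prod S X) \<le> t * op_norm X"
proof -
  have t: "0 \<le> t"
    using order_trans[OF sum_nonneg x] d by simp
  have "op_norm (schur_prod S X) \<le> sqrt t * sqrt t * op_norm X"
  proof (rule op_norm_schur_prod_le[where x = "\<lambda>i k. sqrt (d k) * x i k" and y = "\<lambda>j k. sqrt (d k) * y j k"])
    have "(\<Sum>k\<in>K. sqrt (d k) * x i k * (sqrt (d k) * y j k)) = (\<Sum>k\<in>K. d k * x i k * y j k)" for i j
    proof (rule sum.cong)
      show "sqrt (d k) * x i k * (sqrt (d k) * y j k) = d k * x i k * y j k" if "k \<in> K" for k
        using real_sqrt_mult_self[of "d k"] d[OF that] by (metis abs_of_nonneg mult.assoc mult.left_commute)
    qed simp
    then show "S $ i $ j = of_real (\<Sum>k\<in>K. sqrt (d k) * x i k * (sqrt (d k) * y j k))" for i j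
      by (simp only: S)
  qed (use x y d t in \<open>simp_all add: power_mult_distrib\<close>)
  then show ?thesis
    using t by simp
qed

lemma op_norm_zero_matrix: "op_norm (0 :: 'a::{euclidean_space,real_normed_field}^'n^'m) = 0"
  by (intro antisym op_norm_le op_norm_nonneg) simp_all

lemma schur_norm_le:
  fixes S :: "'a::{euclidean_space,real_normed_field}^'n^'m"
  assumes "\<And>X. op_norm X \<le> 1 \<Longrightarrow> op_norm (schur_prod S X) \<le> t"
  shows "schur_norm S \<le> t"
  unfolding schur_norm_def
proof (rule cSUP_least)
  have "(0::'a^'n^'m) \<in> {X. op_norm X \<le> 1}"
    by (simp add: op_norm_zero_matrix)
  then show "{X::'a^'n^'m. op_norm X \<le> 1} \<noteq> {}"
    by blast
qed (use assms in simp)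

lemma op_norm_schur_prod_le_norm:
  fixes X :: "'a::{euclidean_space,real_normed_field}^'n^'m"
  shows "op_norm (schur_prod (matrix_of_real S) X) \<le> norm S * op_norm X"
proof -
  have "op_norm (schur_prod (matrix_of_real S) X) \<le> norm S * 1 * op_norm X"
  proof (rule op_norm_schur_prod_le[where K = UNIV and x = "\<lambda>i k. S $ i $ k" and y = "\<lambda>j k. if k = j then 1 else 0"])
    fix i
    have "(\<Sum>k\<in>UNIV. (S $ i $ k)\<^sup>2) = (norm (S $ i))\<^sup>2"
      by (simp add: norm_vec_power2)
    also have "\<dots> \<le> (norm S)\<^sup>2"
      by (intro power_mono Finite_Cartesian_Product.norm_nth_le) simp
    finally show "(\<Sum>k\<in>UNIV. (S $ i $ k)\<^sup>2) \<le> (norm S)\<^sup>2" .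
    show "(\<Sum>k\<in>UNIV. (if k = j then 1 else 0)\<^sup>2) \<le> (1::real)\<^sup>2" for j :: 'n
      by (simp add: if_distrib[of "\<lambda>r::real. r\<^sup>2"] cong: if_cong)
  qed (simp_all add: matrix_of_real_def if_distrib cong: if_cong)
  then show ?thesis
    by simp
qed

lemma op_norm_schur_prod_le_schur_norm:
  fixes X :: "'a::{euclidean_space,real_normed_field}^'n^'m"
  assumes "op_norm X \<le> 1"
  shows "op_norm (schur_prod (matrix_of_real S) X) \<le> schur_norm (matrix_of_real S :: 'a^'n^'m)"
  unfolding schur_norm_def
proof (rule cSUP_upper)
  show "X \<in> {X. op_norm X \<le> 1}"
    using assms by simp
  have "op_norm (schur_prod (matrix_of_real S) Y) \<le> norm S" if "op_norm Y \<le> 1" for Y :: "'a^'n^'m"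
    using op_norm_schur_prod_le_norm[of S Y] that op_norm_nonneg[of Y]
    by (meson mult_left_le norm_ge_zero order_trans)
  then show "bdd_above ((\<lambda>X :: 'a^'n^'m. op_norm (schur_prod (matrix_of_real S) X)) ` {X. op_norm X \<le> 1})"
    by (auto simp: bdd_above_def)
qed

lemma schur_prod_matrix_of_real:
  "schur_prod (matrix_of_real A) (matrix_of_real X) = (matrix_of_real (schur_prod A X) :: 'a::real_algebra_1^'n^'m)"
  by (simp add: schur_prod_def matrix_of_real_def vec_eq_iff)

lemma op_norm_matrix_of_real_gt:
  fixes M :: "real^'n^'m"
  assumes "c * norm z < norm (M *v z)"
  shows "c < op_norm (matrix_of_real M :: 'a::{euclidean_space,real_normed_field}^'n^'m)"
proof (rule op_norm_gt)
  define z' :: "'a^'n" where "z' = (\<chi> j. of_real (z $ j))"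
  have "matrix_of_real M *v z' = (\<chi> i. of_real ((M *v z) $ i))"
    by (simp add: z'_def matrix_of_real_def matrix_vector_mult_def vec_eq_iff)
  then have "norm (matrix_of_real M *v z') = norm (M *v z)" and "norm z' = norm z"
    by (simp_all add: z'_def norm_vec_def)
  with assms show "c * norm z' < norm (matrix_of_real M *v z')"
    by simp
qed

lemma op_norm_matrix_of_real_orthogonal:
  fixes Q :: "real^'n^'n"
  assumes "orthogonal_matrix Q"
  shows "op_norm (matrix_of_real Q :: 'a::{euclidean_space,real_normed_field}^'n^'n) \<le> 1"
proof (rule op_norm_le)
  fix z :: "'a^'n"
  have columns: "(\<Sum>i\<in>UNIV. Q $ i $ j * Q $ i $ l) = of_bool (j = l)" for j l
    using assms unfolding orthogonal_matrix
    by (simp add: vec_eq_iff matrix_matrix_mult_def transpose_def mat_def of_bool_def)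
  have "(norm (matrix_of_real Q *v z))\<^sup>2
      = (\<Sum>i\<in>UNIV. (\<Sum>j\<in>UNIV. Q $ i $ j *\<^sub>R z $ j) \<bullet> (\<Sum>l\<in>UNIV. Q $ i $ l *\<^sub>R z $ l))"
    by (simp add: power2_norm_eq_inner inner_vec_def matrix_vector_mult_def matrix_of_real_def scaleR_conv_of_real)
  also have "\<dots> = (\<Sum>i\<in>UNIV. \<Sum>l\<in>UNIV. \<Sum>j\<in>UNIV. Q $ i $ j * Q $ i $ l * (z $ j \<bullet> z $ l))"
    by (simp add: inner_sum_left inner_sum_right sum_distrib_left mult_ac)
  also have "\<dots> = (\<Sum>l\<in>UNIV. \<Sum>j\<in>UNIV. \<Sum>i\<in>UNIV. Q $ i $ j * Q $ i $ l * (z $ j \<bullet> z $ l))"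
    by (subst sum.swap) (rule sum.cong[OF refl sum.swap])
  also have "\<dots> = (\<Sum>l\<in>UNIV. z $ l \<bullet> z $ l)"
    by (simp add: sum_distrib_right[symmetric] columns)
  also have "\<dots> = (norm z)\<^sup>2"
    by (simp add: power2_norm_eq_inner inner_vec_def)
  finally show "norm (matrix_of_real Q *v z) \<le> 1 * norm z"
    by (simp add: power2_eq_iff_nonneg)
qed simp

lemma vector_4 [simp]:
  "(vector [a, b, c, d] :: 'a::zero^4) $ 1 = a"
  "(vector [a, b, c, d] :: 'a^4) $ 2 = b"
  "(vector [a, b, c, d] :: 'a^4) $ 3 = c"
  "(vector [a, b, c, d] :: 'a^4) $ 4 = d"
  unfolding vector_def by simp_all

definition A_mat :: "real^4^4" where
  "A_mat = vector [vector [1,1,0,0], vector [0,1,1,0], vector [0,0,1,1], vector [0,0,1,0]]"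

definition B_mat :: "real^4^4" where
  "B_mat = vector [vector [1,1,0,0], vector [0,1,1,0], vector [0,0,1,1], vector [0,0,0,1]]"

lemma matrix_of_real_A_mat:
  "matrix_of_real A_mat =
    (vector [vector [1,1,0,0], vector [0,1,1,0], vector [0,0,1,1], vector [0,0,1,0]] :: 'a::real_algebra_1^4^4)"
  by (simp add: matrix_of_real_def A_mat_def vec_eq_iff forall_4)

lemma matrix_of_real_B_mat:
  "matrix_of_real B_mat =
    (vector [vector [1,1,0,0], vector [0,1,1,0], vector [0,0,1,1], vector [0,0,0,1]] :: 'a::real_algebra_1^4^4)"
  by (simp add: matrix_of_real_def B_mat_def vec_eq_iff forall_4)

(* An LDL^T decomposition of a positive semidefinite 8 x 8 matrix [[P, B], [B^T, Q]] whose
   diagonal is constantly 154/125: the weights are the pivots, and the k-th column of L splits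
   into the k-th row factor (first four entries) and column factor (last four entries). *)
definition B_weights :: "real list" where
  "B_weights = [154/125, 324231/308000, 51487407/54038500, 335755824667/411899256000,
    218989998718/41969478083375, 1959740818231/1313939992308000, 1414654216221/979870409115500,
    17658622948001/11317233729768000]"

definition B_row_factors :: "(real^4) list" where
  "B_row_factors = [
    vector [1, 235/616, -145/1232, 145/1232],
    vector [0, 1, 107865/216154, -145/762],
    vector [0, 0, 1, 126888355/205949628],
    vector [0, 0, 0, 1],
    0, 0, 0, 0]"

definition B_col_factors :: "(real^4) list" where
  "B_col_factors = [
    vector [125/154, 125/154, 0, 0],
    vector [-117500/324231, 500/851, 308000/324231, 0],
    vector [16647500/51487407, -10318750/51487407, 27072250/51487407, 54038500/51487407],
    vector [-156560110000/335755824667, 48459125000/335755824667, -325000/2238029, 158122546000/335755824667],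
    vector [1, -158654203255/875959994872, 72880423285/1751919989744, 225469576715/1751919989744],
    vector [0, 1, -45068646405/3919481636462, 338905646605/3919481636462],
    vector [0, 0, 1, -324994524935/5658616864884],
    vector [0, 0, 0, 1]]"

lemma B_weights_nonneg: "k < 8 \<Longrightarrow> 0 \<le> B_weights ! k"
  by (simp add: B_weights_def less_Suc_eq numeral_eq_Suc, elim disjE) simp_all

lemma B_mat_factorization:
  "B_mat $ i $ j = (\<Sum>k<8. B_weights ! k * (B_row_factors ! k) $ i * (B_col_factors ! k) $ j)"
  using exhaust_4[of i] exhaust_4[of j]
  by (elim disjE; simp add: B_mat_def B_weights_def B_row_factors_def B_col_factors_def numeral_eq_Suc lessThan_Suc)

lemma B_row_factors_norm: "(\<Sum>k<8. B_weights ! k * ((B_row_factors ! k) $ i)\<^sup>2) = 154/125"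
  using exhaust_4[of i]
  by (elim disjE; simp add: B_weights_def B_row_factors_def numeral_eq_Suc lessThan_Suc power2_eq_square)

lemma B_col_factors_norm: "(\<Sum>k<8. B_weights ! k * ((B_col_factors ! k) $ j)\<^sup>2) = 154/125"
  using exhaust_4[of j]
  by (elim disjE; simp add: B_weights_def B_col_factors_def numeral_eq_Suc lessThan_Suc power2_eq_square)

definition A_witness :: "real^4^4" where
  "A_witness = vector [
    vector [81/95, 48/95, -12/95, 4/95],
    vector [-32/95, 69/95, 54/95, -18/95],
    vector [12/95, -14/95, 51/95, 78/95],
    vector [36/95, -42/95, 58/95, -51/95]]"

lemma orthogonal_matrix_A_witness: "orthogonal_matrix A_witness"
  unfolding orthogonal_matrix
  by (simp add: A_witness_def vec_eq_iff forall_4 matrix_matrix_mult_def transpose_def mat_def sum_4)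

lemma norm_schur_prod_A_witness_gt:
  "154/125 * norm (vector [1, 2, 2, 1] :: real^4)
     < norm (schur_prod A_mat A_witness *v vector [1, 2, 2, 1])"
proof (rule power2_less_imp_less)
  have image: "schur_prod A_mat A_witness *v vector [1, 2, 2, 1] = vector [177/95, 246/95, 36/19, 116/95]"
    by (simp add: A_mat_def A_witness_def schur_prod_def matrix_vector_mult_def sum_4 vec_eq_iff forall_4)
  have "(154/125 * norm (vector [1, 2, 2, 1] :: real^4))\<^sup>2 = (154/125)\<^sup>2 * 10"
    unfolding power_mult_distrib norm_vec_power2 by (simp add: sum_4)
  also have "\<dots> < 137701/9025"
    by (simp add: power2_eq_square)
  also have "\<dots> = (norm (schur_prod A_mat A_witness *v vector [1, 2, 2, 1]))\<^sup>2"
    unfolding image norm_vec_power2 by (simp add: sum_4 power2_eq_square)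
  finally show "(154/125 * norm (vector [1, 2, 2, 1] :: real^4))\<^sup>2
      < (norm (schur_prod A_mat A_witness *v vector [1, 2, 2, 1]))\<^sup>2" .
qed simp

lemma schur_norm_B_mat_lt_A_mat:
  "schur_norm (matrix_of_real B_mat :: 'a::{euclidean_space,real_normed_field}^4^4)
     < schur_norm (matrix_of_real A_mat :: 'a^4^4)"
proof -
  have "schur_norm (matrix_of_real B_mat :: 'a^4^4) \<le> 154/125"
  proof (rule schur_norm_le)
    fix X :: "'a^4^4"
    assume "op_norm X \<le> 1"
    moreover have "op_norm (schur_prod (matrix_of_real B_mat) X) \<le> 154/125 * op_norm X"
    proof (rule op_norm_schur_prod_le_weighted)
      show "matrix_of_real B_mat $ i $ j
          = of_real (\<Sum>k<8. B_weights ! k * (B_row_factors ! k) $ i * (B_col_factors ! k) $ j)" for i j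
        by (simp add: matrix_of_real_def B_mat_factorization)
    qed (simp_all add: B_weights_nonneg B_row_factors_norm B_col_factors_norm)
    ultimately show "op_norm (schur_prod (matrix_of_real B_mat) X) \<le> 154/125"
      by simp
  qed
  also have "154/125 < op_norm (matrix_of_real (schur_prod A_mat A_witness) :: 'a^4^4)"
    by (rule op_norm_matrix_of_real_gt[OF norm_schur_prod_A_witness_gt])
  also have "\<dots> \<le> schur_norm (matrix_of_real A_mat :: 'a^4^4)"
    unfolding schur_prod_matrix_of_real[symmetric]
    by (intro op_norm_schur_prod_le_schur_norm op_norm_matrix_of_real_orthogonal orthogonal_matrix_A_witness)
  finally show ?thesis .
qed

theorem proposition5p5:
  shows "schur_norm (vector [vector [1,1,0,0], vector [0,1,1,0], vector [0,0,1,1], vector [0,0,1,0]] :: real^4^4)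
       > schur_norm (vector [vector [1,1,0,0], vector [0,1,1,0], vector [0,0,1,1], vector [0,0,0,1]] :: real^4^4)
    \<and> schur_norm (vector [vector [1,1,0,0], vector [0,1,1,0], vector [0,0,1,1], vector [0,0,1,0]] :: complex^4^4)
       > schur_norm (vector [vector [1,1,0,0], vector [0,1,1,0], vector [0,0,1,1], vector [0,0,0,1]] :: complex^4^4)"
  using schur_norm_B_mat_lt_A_mat[where 'a = real] schur_norm_B_mat_lt_A_mat[where 'a = complex]
  by (simp add: matrix_of_real_A_mat matrix_of_real_B_mat)

end
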